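(* Let $\mathcal{X}\subseteq\mathbb{R}^n$, $\mathcal{Z}=\mathcal{X}\times\mathcal{Y}$, $\rho$ a probability distribution on $\mathcal{Z}$, $\mathcal{W}\subseteq\mathbb{R}^p$ compact, and let $\|\cdot\|_{\mathrm{adv}}$ be a norm on $\mathbb{R}^n$ with dual norm $\|\cdot\|_{\mathrm{adv}*}$, and $d(x,x')=\|x-x'\|_{\mathrm{adv}}$. Let $\ell:\mathcal{Z}\times\mathcal{W}\to\mathbb{R}^+$ be differentiable in $x$ and satisfy $\ell((x',y),w)-\ell((x,y),w)\ge\langle\nabla_x\ell((x,y),w),x'-x\rangle$ for all $x,x',y,w$. Define $R^*_\epsilon=\inf_{w\in\mathcal{W}}\mathbb{E}_{(x,y)\sim\rho}\big[\sup_{x':\|x-x'\|_{\mathrm{adv}}\le\epsilon}\ell((x',y),w)\big]$. Then $$R^*_\epsilon\ge R^*_0+\epsilon\inf_{w\in\mathcal{W}}\mathbb{E}_{(x,y)\sim\rho}\big[\|\nabla_x\ell((x,y),w)\|_{\mathrm{adv}*}\big].$$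
   Context: $R^*_0=\inf_{w}\mathbb{E}_{z\sim\rho}\ell(z,w)$ is the optimal standard risk; the dual norm is $\|v\|_{\mathrm{adv}*}=\sup_{\|u\|_{\mathrm{adv}}\le1}\langle v,u\rangle$. *)

theory Defs
  imports "HOL-Analysis.Analysis" "HOL-Probability.Probability"
begin

definition is_norm :: "('a::real_vector \<Rightarrow> real) \<Rightarrow> bool" where
  "is_norm N \<longleftrightarrow> (\<forall>x. 0 \<le> N x) \<and> (\<forall>x. N x = 0 \<longleftrightarrow> x = 0)
     \<and> (\<forall>c x. N (c *\<^sub>R x) = \<bar>c\<bar> * N x) \<and> (\<forall>x y. N (x + y) \<le> N x + N y)"

definition dual_norm :: "('a::real_inner \<Rightarrow> real) \<Rightarrow> 'a \<Rightarrow> real" where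
  "dual_norm N v = (SUP u\<in>{u. N u \<le> 1}. v \<bullet> u)"

text \<open>Optimal adversarial risk, losses being nonnegative, expectations as nonnegative integrals.\<close>
definition adv_risk ::
  "('x::real_vector \<Rightarrow> real) \<Rightarrow> ('x \<times> 'y) measure \<Rightarrow> 'w set \<Rightarrow> ('x \<Rightarrow> 'y \<Rightarrow> 'w \<Rightarrow> real) \<Rightarrow> real \<Rightarrow> ennreal" where
  "adv_risk N \<rho> W loss \<epsilon> =
     (INF w\<in>W. \<integral>\<^sup>+ z. (SUP x'\<in>{x'. N (fst z - x') \<le> \<epsilon>}. ennreal (loss x' (snd z) w)) \<partial>\<rho>)"

end

theory Submission imports Defs begin

text \<open>Perturbing x to x + \<epsilon> u with N u \<le> 1 raises the loss by at least \<epsilon> (G \<bullet> u), by the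
  first-order inequality; taking the supremum over u, the worst-case loss in the \<epsilon>-ball
  dominates the clean loss plus \<epsilon> times the dual norm of G, pointwise. Integrating (the
  nonnegative integral is superadditive even without measurability) and taking the infimum
  over W gives the bound.\<close>

lemma nn_integral_superadditive:
  "integral\<^sup>N M f + integral\<^sup>N M g \<le> (\<integral>\<^sup>+x. f x + g x \<partial>M)"
proof -
  let ?S = "\<lambda>f::_ \<Rightarrow> ennreal. {s. simple_function M s \<and> s \<le> f}"
  have S_nonempty: "?S f \<noteq> {}" for f
  proof -
    have "(\<lambda>_. 0) \<in> ?S f" by (auto simp: le_fun_def)
    then show ?thesis by blast
  qed
  have simple_sum_le: "integral\<^sup>S M s + integral\<^sup>S M t \<le> (\<integral>\<^sup>+x. f x + g x \<partial>M)"
    if "s \<in> ?S f" "t \<in> ?S g" for s t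
  proof -
    have "integral\<^sup>S M s + integral\<^sup>S M t = integral\<^sup>S M (\<lambda>x. s x + t x)"
      using that by (subst simple_integral_add) auto
    also have "\<dots> \<le> (\<integral>\<^sup>+x. f x + g x \<partial>M)"
      unfolding nn_integral_def using that
      by (intro SUP_upper) (auto simp: le_fun_def intro: add_mono)
    finally show ?thesis .
  qed
  have "integral\<^sup>N M f + integral\<^sup>N M g = (SUP s\<in>?S f. SUP t\<in>?S g. integral\<^sup>S M s + integral\<^sup>S M t)"
    unfolding nn_integral_def
    by (simp add: ennreal_SUP_add_left[symmetric, OF S_nonempty]
                  ennreal_SUP_add_right[symmetric, OF S_nonempty])
  also have "\<dots> \<le> (\<integral>\<^sup>+x. f x + g x \<partial>M)"
    by (intro SUP_least simple_sum_le)
  finally show ?thesis .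
qed

lemma nn_integral_cmult_le: "c * integral\<^sup>N M f \<le> (\<integral>\<^sup>+x. c * f x \<partial>M)"
proof -
  have "c * integral\<^sup>N M f = (SUP s\<in>{s. simple_function M s \<and> s \<le> f}. integral\<^sup>S M (\<lambda>x. c * s x))"
    unfolding nn_integral_def by (simp add: SUP_mult_left_ennreal)
  also have "\<dots> \<le> (\<integral>\<^sup>+x. c * f x \<partial>M)"
    unfolding nn_integral_def
    by (intro SUP_least SUP_upper) (auto simp: le_fun_def intro: mult_left_mono)
  finally show ?thesis .
qed

lemma is_norm_zero: "is_norm N \<Longrightarrow> N 0 = 0"
  unfolding is_norm_def by blast

lemma is_norm_scaleR: "is_norm N \<Longrightarrow> N (c *\<^sub>R x) = \<bar>c\<bar> * N x"
  unfolding is_norm_def by blast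

lemma is_norm_ball_zero:
  assumes "is_norm N"
  shows "{x'. N (x - x') \<le> 0} = {x}"
proof -
  have "N (x - x') \<le> 0 \<longleftrightarrow> x' = x" for x'
    using assms unfolding is_norm_def by (metis antisym right_minus_eq order_refl)
  then show ?thesis by auto
qed

lemma dual_norm_le:
  assumes "is_norm N" and "\<And>u. N u \<le> 1 \<Longrightarrow> v \<bullet> u \<le> c"
  shows "dual_norm N v \<le> c"
proof -
  have "0 \<in> {u. N u \<le> 1}" using is_norm_zero[OF assms(1)] by simp
  then show ?thesis
    unfolding dual_norm_def using assms(2) by (intro cSUP_least) auto
qed

text \<open>The bound c is needed: on an unbounded set the real SUP is a junk value.\<close>
lemma dual_norm_nonneg:
  assumes "is_norm N" and "\<And>u. N u \<le> 1 \<Longrightarrow> v \<bullet> u \<le> c"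
  shows "0 \<le> dual_norm N v"
proof -
  have "v \<bullet> 0 \<le> dual_norm N v"
    unfolding dual_norm_def using assms is_norm_zero[OF assms(1)]
    by (intro cSUP_upper bdd_aboveI2) auto
  then show ?thesis by simp
qed

lemma first_order_inner_le:
  fixes L :: "'a::real_inner \<Rightarrow> real"
  assumes N: "is_norm N" and "\<epsilon> > 0" and "N u \<le> 1"
    and first_order: "\<And>x'. L x' - L x \<ge> g \<bullet> (x' - x)"
    and bounded: "\<And>x'. N (x - x') \<le> \<epsilon> \<Longrightarrow> L x' \<le> m"
  shows "g \<bullet> u \<le> (m - L x) / \<epsilon>"
proof -
  have "N (x - (x + \<epsilon> *\<^sub>R u)) = \<epsilon> * N u"
    using is_norm_scaleR[OF N, of "-\<epsilon>" u] \<open>\<epsilon> > 0\<close> by simp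
  also have "\<dots> \<le> \<epsilon>"
    using \<open>N u \<le> 1\<close> \<open>\<epsilon> > 0\<close> by (simp add: mult_left_le)
  finally have "L (x + \<epsilon> *\<^sub>R u) \<le> m" by (rule bounded)
  with first_order[of "x + \<epsilon> *\<^sub>R u"] have "\<epsilon> * (g \<bullet> u) \<le> m - L x"
    by (simp add: inner_scaleR_right)
  with \<open>\<epsilon> > 0\<close> show ?thesis by (simp add: field_simps)
qed

lemma first_order_bound_SUP_ball:
  fixes L :: "'a::real_inner \<Rightarrow> real"
  assumes N: "is_norm N" and "\<epsilon> \<ge> 0" and "L x \<ge> 0"
    and first_order: "\<And>x'. L x' - L x \<ge> g \<bullet> (x' - x)"
  shows "ennreal (L x) + ennreal \<epsilon> * ennreal (dual_norm N g)
           \<le> (SUP x'\<in>{x'. N (x - x') \<le> \<epsilon>}. ennreal (L x'))"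
    (is "_ \<le> ?sup")
proof (cases "\<epsilon> = 0")
  case True
  have "x \<in> {x'. N (x - x') \<le> \<epsilon>}"
    using is_norm_zero[OF N] \<open>\<epsilon> \<ge> 0\<close> by simp
  then have "ennreal (L x) \<le> ?sup" by (rule SUP_upper)
  with True show ?thesis by simp
next
  case False
  with \<open>\<epsilon> \<ge> 0\<close> have "\<epsilon> > 0" by simp
  show ?thesis
  proof (cases "?sup = top")
    case True
    then show ?thesis by (simp only: top_greatest)
  next
    case False
    then obtain m where m: "?sup = ennreal m" "m \<ge> 0"
      by (cases ?sup) auto
    have bounded: "L x' \<le> m" if "N (x - x') \<le> \<epsilon>" for x'
    proof -
      have "ennreal (L x') \<le> ennreal m"
        using that m(1) by (metis (mono_tags) SUP_upper mem_Collect_eq)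
      then show ?thesis using m(2) by (auto simp: ennreal_le_iff2)
    qed
    note inner_le = first_order_inner_le[OF N \<open>\<epsilon> > 0\<close> _ first_order bounded]
    have "0 \<le> dual_norm N g"
      using inner_le by (rule dual_norm_nonneg[OF N])
    then have "ennreal (L x) + ennreal \<epsilon> * ennreal (dual_norm N g)
               = ennreal (L x + \<epsilon> * dual_norm N g)"
      using \<open>\<epsilon> > 0\<close> \<open>L x \<ge> 0\<close> by (simp add: ennreal_plus ennreal_mult)
    also have "\<dots> \<le> ennreal m"
    proof (rule ennreal_leI)
      have "dual_norm N g \<le> (m - L x) / \<epsilon>"
        using inner_le by (rule dual_norm_le[OF N])
      with \<open>\<epsilon> > 0\<close> show "L x + \<epsilon> * dual_norm N g \<le> m"
        by (simp add: field_simps)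
    qed
    finally show ?thesis using m(1) by simp
  qed
qed

lemma adv_risk_zero:
  assumes "is_norm N"
  shows "adv_risk N \<rho> W loss 0 = (INF w\<in>W. \<integral>\<^sup>+ z. ennreal (loss (fst z) (snd z) w) \<partial>\<rho>)"
  unfolding adv_risk_def is_norm_ball_zero[OF assms] by simp

theorem corollary3:
  fixes \<rho> :: "((real^('n::finite)) \<times> 'y) measure"
    and W :: "(real^('p::finite)) set"
    and N :: "real^'n \<Rightarrow> real"
    and loss :: "real^'n \<Rightarrow> 'y \<Rightarrow> real^'p \<Rightarrow> real"
    and G :: "real^'n \<Rightarrow> 'y \<Rightarrow> real^'p \<Rightarrow> real^'n"
    and \<epsilon> :: real
  assumes "prob_space \<rho>"
    and "compact W"
    and "is_norm N"
    and "\<epsilon> \<ge> 0"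
    and nonneg: "\<And>x y w. w \<in> W \<Longrightarrow> loss x y w \<ge> 0"
    and grad: "\<And>x y w. w \<in> W \<Longrightarrow> ((\<lambda>x'. loss x' y w) has_derivative (\<lambda>h. G x y w \<bullet> h)) (at x)"
    and cvx: "\<And>x x' y w. w \<in> W \<Longrightarrow> loss x' y w - loss x y w \<ge> G x y w \<bullet> (x' - x)"
  shows "adv_risk N \<rho> W loss \<epsilon> \<ge> adv_risk N \<rho> W loss 0
           + ennreal \<epsilon> * (INF w\<in>W. \<integral>\<^sup>+ z. ennreal (dual_norm N (G (fst z) (snd z) w)) \<partial>\<rho>)"
proof -
  let ?L = "\<lambda>w z. ennreal (loss (fst z) (snd z) w)"
  let ?D = "\<lambda>w z. ennreal (dual_norm N (G (fst z) (snd z) w))"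
  let ?A = "\<lambda>w z. SUP x'\<in>{x'. N (fst z - x') \<le> \<epsilon>}. ennreal (loss x' (snd z) w)"
  have risk_le: "integral\<^sup>N \<rho> (?L w) + ennreal \<epsilon> * integral\<^sup>N \<rho> (?D w) \<le> integral\<^sup>N \<rho> (?A w)"
    if "w \<in> W" for w
  proof -
    have "integral\<^sup>N \<rho> (?L w) + ennreal \<epsilon> * integral\<^sup>N \<rho> (?D w)
          \<le> (\<integral>\<^sup>+ z. ?L w z + ennreal \<epsilon> * ?D w z \<partial>\<rho>)"
      by (intro order.trans[OF add_left_mono nn_integral_superadditive] nn_integral_cmult_le)
    also have "\<dots> \<le> integral\<^sup>N \<rho> (?A w)"
      using \<open>w \<in> W\<close>
      by (intro nn_integral_mono first_order_bound_SUP_ball \<open>is_norm N\<close> \<open>\<epsilon> \<ge> 0\<close> nonneg cvx)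
    finally show ?thesis .
  qed
  have "adv_risk N \<rho> W loss 0 + ennreal \<epsilon> * (INF w\<in>W. integral\<^sup>N \<rho> (?D w))
        \<le> (INF w\<in>W. integral\<^sup>N \<rho> (?L w) + ennreal \<epsilon> * integral\<^sup>N \<rho> (?D w))"
    unfolding adv_risk_zero[OF \<open>is_norm N\<close>]
    by (intro INF_greatest add_mono mult_left_mono INF_lower) auto
  also have "\<dots> \<le> adv_risk N \<rho> W loss \<epsilon>"
    unfolding adv_risk_def using risk_le by (intro INF_mono) blast
  finally show ?thesis .
qed

end
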